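(* For any parameters $a,b,t>0$ with $1/t<1/a<b<t$ and $\rho>0$, up to congruence and dilation the image of the upper half-plane under $z\mapsto\operatorname{Re}\int^z\big(\tfrac12(\phi_2-\phi_1),\tfrac i2(\phi_2+\phi_1),dh\big)$ is a minimal surface with the following boundary behaviour: the interval $v_8v_1$ (through $\infty$) and the interval $[v_4,v_5]$ are mapped to straight segments parallel to the $x$-axis (not necessarily in the plane $y=0$); $[v_1,v_2]$ (resp. $[v_5,v_6]$) is mapped to a planar symmetry curve in the plane $x=+A$ (resp. $x=-A$); $[v_2,v_3]$ (resp. $[v_6,v_7]$) is mapped to a planar symmetry curve in the plane $y=-B$ (resp. $y=+B$); $[v_3,v_4]$ (resp. $[v_7,v_8]$) is mapped to a planar symmetry curve in the plane $x=+A'$ (resp. $x=-A'$), for some constants $A,A',B$. Moreover the image is symmetric under the inversion in the image of $i$.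
   Context: Weierstrass data: for real $a,b,t>0$ with $1/t<1/a<b<t$ and $\rho>0$, on the upper half-plane set $\phi_1=-\rho\,(z+a)^{1/2}(z+1/b)^{-1/2}(z-1/a)^{1/2}(z-b)^{-1/2}[(z+t)(z+1/t)(z-1/t)(z-t)]^{-1/2}dz$, $\phi_2=\rho^{-1}(z+a)^{-1/2}(z+1/b)^{1/2}(z-1/a)^{-1/2}(z-b)^{1/2}[(z+t)(z+1/t)(z-1/t)(z-t)]^{-1/2}dz$, $dh=i[(z+t)(z+1/t)(z-1/t)(z-t)]^{-1/2}dz$ (square roots continuous on the upper half-plane, each factor $(z-c)^{\pm1/2}$ positive for real $z>c$), and let $v_1<\dots<v_8$ be $-t,-a,-1/b,-1/t,1/t,1/a,b,t$. *)

theory Defs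
  imports "HOL-Complex_Analysis.Complex_Analysis"
begin

definition UHP :: "complex set" where
  "UHP = {z. Im z > 0}"

text \<open>For z in the
  upper half-plane, z - c has argument in (0, pi), so this branch is continuous on the
  upper half-plane and positive for real z > c, as required in the paper.\<close>
definition fpow :: "real \<Rightarrow> real \<Rightarrow> complex \<Rightarrow> complex" where
  "fpow c e z = (z - complex_of_real c) powr complex_of_real e"

definition Qfac :: "real \<Rightarrow> complex \<Rightarrow> complex" where
  "Qfac t z = fpow (-t) (-1/2) z * fpow (-1/t) (-1/2) z * fpow (1/t) (-1/2) z * fpow t (-1/2) z"

text \<open>Coefficients of dz in phi_1, phi_2 and dh.\<close>
definition phi1 :: "real \<Rightarrow> real \<Rightarrow> real \<Rightarrow> real \<Rightarrow> complex \<Rightarrow> complex" where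
  "phi1 a b t \<rho> z = - complex_of_real \<rho> * fpow (-a) (1/2) z * fpow (-1/b) (-1/2) z
      * fpow (1/a) (1/2) z * fpow b (-1/2) z * Qfac t z"

definition phi2 :: "real \<Rightarrow> real \<Rightarrow> real \<Rightarrow> real \<Rightarrow> complex \<Rightarrow> complex" where
  "phi2 a b t \<rho> z = complex_of_real (1/\<rho>) * fpow (-a) (-1/2) z * fpow (-1/b) (1/2) z
      * fpow (1/a) (-1/2) z * fpow b (1/2) z * Qfac t z"

definition dhc :: "real \<Rightarrow> complex \<Rightarrow> complex" where
  "dhc t z = \<i> * Qfac t z"

text \<open>The Weierstrass map  z \<mapsto> Re \<integral>^z ((phi2-phi1)/2, i(phi2+phi1)/2, dh),
  integrated from the base point i along the segment [i, z] (the upper half-plane is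
  convex; another base point only changes the map by a translation).\<close>
definition WX :: "real \<Rightarrow> real \<Rightarrow> real \<Rightarrow> real \<Rightarrow> complex \<Rightarrow> real^3" where
  "WX a b t \<rho> z = vector
     [ Re (contour_integral (linepath \<i> z) (\<lambda>w. (phi2 a b t \<rho> w - phi1 a b t \<rho> w) / 2)),
       Re (contour_integral (linepath \<i> z) (\<lambda>w. \<i> * (phi2 a b t \<rho> w + phi1 a b t \<rho> w) / 2)),
       Re (contour_integral (linepath \<i> z) (\<lambda>w. dhc t w)) ]"

definition pderiv_dir :: "(complex \<Rightarrow> 'b::real_normed_vector) \<Rightarrow> complex \<Rightarrow> complex \<Rightarrow> 'b" where
  "pderiv_dir f v z = frechet_derivative f (at z) v"

definition harmonic_on :: "complex set \<Rightarrow> (complex \<Rightarrow> real) \<Rightarrow> bool" where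
  "harmonic_on S u \<longleftrightarrow> (\<forall>z\<in>S. u differentiable (at z)
      \<and> (\<lambda>w. pderiv_dir u 1 w) differentiable (at z)
      \<and> (\<lambda>w. pderiv_dir u \<i> w) differentiable (at z)
      \<and> pderiv_dir (\<lambda>w. pderiv_dir u 1 w) 1 z + pderiv_dir (\<lambda>w. pderiv_dir u \<i> w) \<i> z = 0)"

definition minimal_surface_on :: "complex set \<Rightarrow> (complex \<Rightarrow> real^3) \<Rightarrow> bool" where
  "minimal_surface_on S Y \<longleftrightarrow>
     (\<forall>z\<in>S. Y differentiable (at z)
        \<and> pderiv_dir Y 1 z \<bullet> pderiv_dir Y \<i> z = 0
        \<and> norm (pderiv_dir Y 1 z) = norm (pderiv_dir Y \<i> z)
        \<and> pderiv_dir Y 1 z \<noteq> 0)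
     \<and> (\<forall>j. harmonic_on S (\<lambda>z. Y z $ j))"

text \<open>The boundary interval I (of real numbers) is mapped to a planar symmetry curve in the
  plane {p. p$j = c}: the boundary values lie in the plane (Dirichlet condition) and the
  surface meets the plane orthogonally, i.e. the conormal derivative d/dy of the other two
  coordinates vanishes (Neumann condition; Schwarz reflection).\<close>
definition planar_symmetry_curve :: "(complex \<Rightarrow> real^3) \<Rightarrow> real set \<Rightarrow> 3 \<Rightarrow> real \<Rightarrow> bool" where
  "planar_symmetry_curve Y I j c \<longleftrightarrow>
     (\<forall>s\<in>I. ((\<lambda>z. Y z $ j) \<longlongrightarrow> c) (at (complex_of_real s) within UHP)
        \<and> (\<forall>k. k \<noteq> j \<longrightarrow>
             ((\<lambda>z. pderiv_dir (\<lambda>w. Y w $ k) \<i> z) \<longlongrightarrow> 0) (at (complex_of_real s) within UHP)))"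

definition maps_to_xline :: "(complex \<Rightarrow> real^3) \<Rightarrow> real set \<Rightarrow> real \<Rightarrow> real \<Rightarrow> bool" where
  "maps_to_xline Y I c2 c3 \<longleftrightarrow>
     (\<forall>s\<in>I. ((\<lambda>z. Y z $ 2) \<longlongrightarrow> c2) (at (complex_of_real s) within UHP)
        \<and> ((\<lambda>z. Y z $ 3) \<longlongrightarrow> c3) (at (complex_of_real s) within UHP))"

end

theory Submission
  imports Defs
begin

text \<open>The coordinates of \<open>WX\<close> are real parts of primitives of the holomorphic functions
  \<open>(\<phi>\<^sub>2 - \<phi>\<^sub>1)/2\<close>, \<open>\<i>(\<phi>\<^sub>2 + \<phi>\<^sub>1)/2\<close> and \<open>dh\<close>, whose squares add up to
  \<open>-\<phi>\<^sub>1\<phi>\<^sub>2 + dh\<^sup>2 = 0\<close>; hence \<open>WX\<close> is a conformal harmonic immersion, a minimal surface.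
  Across each boundary interval all square-root branches continue analytically, and on the
  interval each of \<open>\<phi>\<^sub>1\<close>, \<open>\<phi>\<^sub>2\<close>, \<open>dh\<close> is a power of \<open>\<i>\<close> (counting the branch points
  to its right) times a real function, so each integrand is real or imaginary. Where an integrand is imaginary the corresponding coordinate is constant along
  the interval, where it is real the normal derivative of the coordinate vanishes. Finally the
  integrands satisfy \<open>f(-1/z) = -z\<^sup>2 f(z)\<close>, so \<open>WX(-1/z) = -WX(z)\<close> and \<open>WX(\<i>) = 0\<close>: this is
  the point symmetry, and it carries the boundary constants on the intervals left of \<open>0\<close> to
  those on their images under \<open>z \<mapsto> -1/z\<close>, with opposite sign.\<close>

lemma open_UHP: "open UHP"
  unfolding UHP_def by (simp add: open_halfspace_Im_gt)

lemma convex_UHP: "convex UHP"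
  unfolding UHP_def by (simp add: convex_halfspace_Im_gt)

lemma i_in_UHP [simp]: "\<i> \<in> UHP"
  by (simp add: UHP_def)

lemma UHP_neq_of_real: "z \<in> UHP \<Longrightarrow> z \<noteq> complex_of_real c"
  by (auto simp: UHP_def)

lemma neg_inverse_in_UHP: "z \<in> UHP \<Longrightarrow> -1/z \<in> UHP"
  unfolding UHP_def by (auto simp: Im_divide intro!: divide_pos_pos add_nonneg_pos)

lemma linepath_integral_has_field_derivative:
  assumes f: "f holomorphic_on S" and S: "open S" "convex S" and "a \<in> S" "z \<in> S"
  shows "((\<lambda>w. contour_integral (linepath a w) f) has_field_derivative f z) (at z)"
proof -
  have "((\<lambda>w. contour_integral (linepath a w) f) has_field_derivative f z) (at z within S)"
  proof (rule triangle_contour_integrals_convex_primitive)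
    fix u v assume "u \<in> S" "v \<in> S"
    have "path_image (linepath a u +++ linepath u v +++ linepath v a) \<subseteq> S"
      using S \<open>a \<in> S\<close> \<open>u \<in> S\<close> \<open>v \<in> S\<close> by (auto simp: path_image_join convex_contains_segment)
    then have "(f has_contour_integral 0) (linepath a u +++ linepath u v +++ linepath v a)"
      by (intro Cauchy_theorem_convex_simple[OF f S(2)]) auto
    then show "contour_integral (linepath a u) f + contour_integral (linepath u v) f +
                 contour_integral (linepath v a) f = 0"
      by (rule has_chain_integral_chain_integral3)
  qed (use assms holomorphic_on_imp_continuous_on in auto)
  then show ?thesis
    using at_within_open[OF \<open>z \<in> S\<close> S(1)] by simp
qed

definition upper_primitive :: "(complex \<Rightarrow> complex) \<Rightarrow> complex \<Rightarrow> complex" where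
  "upper_primitive f z = contour_integral (linepath \<i> z) f"

lemma upper_primitive_has_field_derivative:
  "f holomorphic_on UHP \<Longrightarrow> z \<in> UHP \<Longrightarrow> (upper_primitive f has_field_derivative f z) (at z)"
  unfolding upper_primitive_def[abs_def]
  by (rule linepath_integral_has_field_derivative[OF _ open_UHP convex_UHP i_in_UHP])

lemma upper_primitive_neg_inverse:
  assumes f: "f holomorphic_on UHP" and sym: "\<And>z. z \<in> UHP \<Longrightarrow> f (-1/z) = - (z^2) * f z"
    and z: "z \<in> UHP"
  shows "upper_primitive f (-1/z) = - upper_primitive f z"
proof -
  have "\<exists>c. \<forall>w\<in>UHP. upper_primitive f (-1/w) + upper_primitive f w = c"
  proof (rule has_field_derivative_zero_constant[OF convex_UHP])
    fix w assume w: "w \<in> UHP"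
    then have "w \<noteq> 0" using UHP_neq_of_real[of w 0] by simp
    have "((\<lambda>w. -1/w) has_field_derivative 1/w^2) (at w)"
      using \<open>w \<noteq> 0\<close> by (auto intro!: derivative_eq_intros simp: power2_eq_square)
    from DERIV_chain2[OF upper_primitive_has_field_derivative[OF f neg_inverse_in_UHP[OF w]] this]
    have "((\<lambda>w. upper_primitive f (-1/w) + upper_primitive f w)
            has_field_derivative f (-1/w) * (1/w^2) + f w) (at w)"
      by (intro derivative_intros upper_primitive_has_field_derivative[OF f w])
    moreover have "f (-1/w) * (1/w^2) + f w = 0"
      using sym[OF w] \<open>w \<noteq> 0\<close> by (simp add: field_simps)
    ultimately show "((\<lambda>w. upper_primitive f (-1/w) + upper_primitive f w)
                       has_field_derivative 0) (at w within UHP)"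
      by (simp add: has_field_derivative_at_within)
  qed
  moreover have "upper_primitive f (-1/\<i>) + upper_primitive f \<i> = 0"
    by (simp add: upper_primitive_def)
  ultimately have "upper_primitive f (-1/z) + upper_primitive f z = 0"
    using z by (metis i_in_UHP)
  then show ?thesis by (simp add: eq_neg_iff_add_eq_0)
qed

lemma has_derivative_Re_of_field_derivative:
  assumes "(F has_field_derivative D) (at z within S)"
  shows "((\<lambda>w. Re (F w)) has_derivative (\<lambda>h. Re (D * h))) (at z within S)"
  using bounded_linear.has_derivative[OF bounded_linear_Re assms[unfolded has_field_derivative_def]] .

lemma pderiv_dir_Re:
  "(F has_field_derivative D) (at z) \<Longrightarrow> pderiv_dir (\<lambda>w. Re (F w)) v z = Re (D * v)"
  unfolding pderiv_dir_def
  by (simp add: frechet_derivative_at[OF has_derivative_Re_of_field_derivative, symmetric])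

lemma harmonic_on_Re:
  assumes F: "F holomorphic_on S" and S: "open S"
  shows "harmonic_on S (\<lambda>z. Re (F z))"
  unfolding harmonic_on_def
proof (intro ballI conjI)
  fix z assume z: "z \<in> S"
  have F': "deriv F holomorphic_on S" using holomorphic_deriv[OF F S] .
  have dF: "\<And>w. w \<in> S \<Longrightarrow> (F has_field_derivative deriv F w) (at w)"
    using holomorphic_derivI[OF F S] .
  have dF': "\<And>v. ((\<lambda>w. deriv F w * v) has_field_derivative deriv (deriv F) z * v) (at z)"
    by (intro DERIV_cmult_right holomorphic_derivI[OF F' S z])
  have second: "((\<lambda>w. pderiv_dir (\<lambda>w. Re (F w)) v w) has_derivative
                  (\<lambda>h. Re (deriv (deriv F) z * v * h))) (at z)" for v
    by (rule has_derivative_transform_within_open[OF has_derivative_Re_of_field_derivative[OF dF'] S z])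
      (simp add: pderiv_dir_Re[OF dF])
  show "(\<lambda>w. Re (F w)) differentiable at z"
    using has_derivative_Re_of_field_derivative[OF dF[OF z]] by (auto simp: differentiable_def)
  show "(\<lambda>w. pderiv_dir (\<lambda>w. Re (F w)) 1 w) differentiable at z"
    "(\<lambda>w. pderiv_dir (\<lambda>w. Re (F w)) \<i> w) differentiable at z"
    using second by (auto simp: differentiable_def)
  have "pderiv_dir (\<lambda>w. pderiv_dir (\<lambda>w. Re (F w)) v w) v z = Re (deriv (deriv F) z * v * v)" for v
    unfolding pderiv_dir_def[of "\<lambda>w. pderiv_dir (\<lambda>w. Re (F w)) v w"]
    by (simp add: frechet_derivative_at[OF second, symmetric])
  then show "pderiv_dir (\<lambda>w. pderiv_dir (\<lambda>w. Re (F w)) 1 w) 1 z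
          + pderiv_dir (\<lambda>w. pderiv_dir (\<lambda>w. Re (F w)) \<i> w) \<i> z = 0"
    by simp
qed

lemma isotropic_Re_conformal:
  fixes w :: "'n::finite \<Rightarrow> complex"
  assumes iso: "(\<Sum>j\<in>UNIV. (w j)^2) = 0"
  shows "(\<chi> j. Re (w j)) \<bullet> (\<chi> j. Re (w j * \<i>)) = 0"
    and "norm (\<chi> j. Re (w j)) = norm (\<chi> j. Re (w j * \<i>))"
    and "(\<exists>j. w j \<noteq> 0) \<Longrightarrow> (\<chi> j. Re (w j)) \<noteq> 0"
proof -
  have re: "(\<Sum>j\<in>UNIV. (Re (w j))^2 - (Im (w j))^2) = 0"
    using arg_cong[OF iso, of Re] by (simp add: Re_sum power2_eq_square)
  have im: "(\<Sum>j\<in>UNIV. Re (w j) * Im (w j)) = 0"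
    using arg_cong[OF iso, of Im] by (simp add: Im_sum power2_eq_square mult.commute flip: sum_distrib_left)
  show "(\<chi> j. Re (w j)) \<bullet> (\<chi> j. Re (w j * \<i>)) = 0"
    using im by (simp add: inner_vec_def sum_negf)
  have "(\<Sum>j\<in>UNIV. (Re (w j))^2) = (\<Sum>j\<in>UNIV. (Im (w j))^2)"
    using re by (simp add: sum_subtractf)
  then show "norm (\<chi> j. Re (w j)) = norm (\<chi> j. Re (w j * \<i>))"
    by (simp add: norm_eq_sqrt_inner inner_vec_def power2_eq_square)
  assume "\<exists>j. w j \<noteq> 0"
  then obtain k where k: "w k \<noteq> 0" by blast
  show "(\<chi> j. Re (w j)) \<noteq> 0"
  proof
    assume "(\<chi> j. Re (w j)) = 0"
    then have Re0: "\<And>j. Re (w j) = 0" by (simp add: vec_eq_iff)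
    then have "(\<Sum>j\<in>UNIV. (Im (w j))^2) = 0" using re by (simp add: sum_negf)
    then have "(Im (w k))^2 = 0" by (simp add: sum_nonneg_eq_0_iff)
    then show False using k Re0[of k] by (simp add: complex_eq_iff)
  qed
qed

lemma has_derivative_vec_lambda:
  fixes g :: "'n::finite \<Rightarrow> 'a::real_normed_vector \<Rightarrow> real"
  assumes "\<And>j. (g j has_derivative g' j) F"
  shows "((\<lambda>z. \<chi> j. g j z) has_derivative (\<lambda>h. \<chi> j. g' j h)) F"
proof -
  have expand: "\<And>c. (\<chi> j. c j) = (\<Sum>j\<in>UNIV. c j *\<^sub>R axis j (1::real))"
    by (simp add: vec_eq_iff axis_def if_distrib[of "\<lambda>x. _ * x"] cong: if_cong)
  show ?thesis
    unfolding expand by (intro has_derivative_sum has_derivative_scaleR_left assms)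
qed

lemma minimal_surface_on_Re_primitives:
  fixes F f :: "3 \<Rightarrow> complex \<Rightarrow> complex"
  assumes S: "open S"
    and F: "\<And>j z. z \<in> S \<Longrightarrow> (F j has_field_derivative f j z) (at z)"
    and iso: "\<And>z. z \<in> S \<Longrightarrow> (\<Sum>j\<in>UNIV. (f j z)^2) = 0"
    and nondegenerate: "\<And>z. z \<in> S \<Longrightarrow> \<exists>j. f j z \<noteq> 0"
  shows "minimal_surface_on S (\<lambda>z. \<chi> j. Re (F j z))"
  unfolding minimal_surface_on_def
proof (intro conjI ballI allI)
  fix z assume z: "z \<in> S"
  have d: "((\<lambda>z. \<chi> j. Re (F j z)) has_derivative (\<lambda>h. \<chi> j. Re (f j z * h))) (at z)"
    by (intro has_derivative_vec_lambda has_derivative_Re_of_field_derivative F z)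
  then have pd: "pderiv_dir (\<lambda>z. \<chi> j. Re (F j z)) v z = (\<chi> j. Re (f j z * v))" for v
    unfolding pderiv_dir_def by (simp add: frechet_derivative_at[OF d, symmetric])
  note conformal = isotropic_Re_conformal[of "\<lambda>j. f j z", OF iso[OF z]]
  show "(\<lambda>z. \<chi> j. Re (F j z)) differentiable at z"
    using d by (auto simp: differentiable_def)
  show "pderiv_dir (\<lambda>z. \<chi> j. Re (F j z)) 1 z \<bullet> pderiv_dir (\<lambda>z. \<chi> j. Re (F j z)) \<i> z = 0"
    "norm (pderiv_dir (\<lambda>z. \<chi> j. Re (F j z)) 1 z) = norm (pderiv_dir (\<lambda>z. \<chi> j. Re (F j z)) \<i> z)"
    "pderiv_dir (\<lambda>z. \<chi> j. Re (F j z)) 1 z \<noteq> 0"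
    using conformal nondegenerate[OF z] by (simp_all add: pd)
next
  fix j
  have "F j holomorphic_on S"
    using F S by (auto simp: holomorphic_on_open)
  then show "harmonic_on S (\<lambda>z. (\<chi> j. Re (F j z)) $ j)"
    using harmonic_on_Re[OF _ S] by simp
qed

lemma fpow_holomorphic_on_UHP [holomorphic_intros]: "(\<lambda>z. fpow c e z) holomorphic_on UHP"
  unfolding fpow_def UHP_def
  by (intro holomorphic_intros) (auto simp: complex_nonpos_Reals_iff)

lemma fpow_nonzero: "z \<in> UHP \<Longrightarrow> fpow c e z \<noteq> 0"
  using UHP_neq_of_real by (simp add: fpow_def)

lemma fpow_mult_fpow_neg: "z \<in> UHP \<Longrightarrow> fpow c e z * fpow c (-e) z = 1"
  using UHP_neq_of_real[of z c] by (simp add: fpow_def powr_def flip: exp_add)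

lemma fpow_squared: "z \<in> UHP \<Longrightarrow> (fpow c e z)^2 = (z - complex_of_real c) powr (2 * e)"
  using UHP_neq_of_real[of z c]
  by (simp add: fpow_def powr_def power2_eq_square flip: exp_add distrib_right)

lemma fpow_half_squared: "z \<in> UHP \<Longrightarrow> 2 * e = 1 \<Longrightarrow> (fpow c e z)^2 = z - complex_of_real c"
  using UHP_neq_of_real[of z c] by (simp add: fpow_squared)

lemma fpow_neg_half_squared:
  "z \<in> UHP \<Longrightarrow> 2 * e = -1 \<Longrightarrow> (fpow c e z)^2 = inverse (z - complex_of_real c)"
  using UHP_neq_of_real[of z c] by (simp add: fpow_squared powr_minus)

text \<open>The ratio \<open>h1/h2\<close> is continuous with values in \<open>{1, -1}\<close>.\<close>
lemma eq_on_connected_if_squares_eq: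
  fixes h1 h2 :: "complex \<Rightarrow> complex"
  assumes S: "connected S" and h: "continuous_on S h1" "continuous_on S h2"
    and nz: "\<And>z. z \<in> S \<Longrightarrow> h2 z \<noteq> 0"
    and sq: "\<And>z. z \<in> S \<Longrightarrow> (h1 z)^2 = (h2 z)^2"
    and z0: "z0 \<in> S" "h1 z0 = h2 z0" and z: "z \<in> S"
  shows "h1 z = h2 z"
proof -
  define r where "r w = h1 w / h2 w" for w
  have r_cont: "continuous_on S r"
    unfolding r_def using h nz by (intro continuous_intros) auto
  have r_sign: "r w = 1 \<or> r w = -1" if "w \<in> S" for w
  proof -
    have "(r w)^2 = 1" using sq[OF that] nz[OF that] by (simp add: r_def power_divide)
    then show ?thesis by (simp add: power2_eq_1_iff)
  qed
  have "r constant_on S"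
  proof (rule continuous_discrete_range_constant[OF S r_cont])
    fix x assume x: "x \<in> S"
    show "\<exists>e>0. \<forall>y. y \<in> S \<and> r y \<noteq> r x \<longrightarrow> e \<le> norm (r y - r x)"
    proof (intro exI[of _ 1] conjI allI impI)
      fix y assume "y \<in> S \<and> r y \<noteq> r x"
      then have "r y - r x = 2 \<or> r y - r x = -2" using r_sign[OF x] r_sign[of y] by auto
      then show "1 \<le> norm (r y - r x)" by auto
    qed simp
  qed
  then have "r z = r z0"
    using z z0(1) by (auto simp: constant_on_def)
  then show ?thesis
    using z0 nz[OF z] nz[OF z0(1)] by (simp add: r_def)
qed

lemma eq_on_UHP_if_squares_eq:
  fixes h1 h2 :: "complex \<Rightarrow> complex"
  assumes "continuous_on UHP h1" "continuous_on UHP h2" "\<And>z. z \<in> UHP \<Longrightarrow> h2 z \<noteq> 0"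
    "\<And>z. z \<in> UHP \<Longrightarrow> (h1 z)^2 = (h2 z)^2" "h1 \<i> = h2 \<i>" "z \<in> UHP"
  shows "h1 z = h2 z"
  using eq_on_connected_if_squares_eq[OF convex_connected[OF convex_UHP] assms(1-4) i_in_UHP assms(5,6)] .

lemma continuous_on_neg_inverse_comp:
  assumes "f holomorphic_on UHP"
  shows "continuous_on UHP (\<lambda>z. f (-1/z))"
proof (rule continuous_on_compose2[OF holomorphic_on_imp_continuous_on[OF assms]])
  show "continuous_on UHP (\<lambda>z. -1/z)"
    using UHP_neq_of_real[of _ 0] by (intro continuous_intros) auto
qed (use neg_inverse_in_UHP in auto)

definition Pfac :: "real \<Rightarrow> real \<Rightarrow> complex \<Rightarrow> complex" where
  "Pfac a b z = fpow (-a) (1/2) z * fpow (-1/b) (-1/2) z * fpow (1/a) (1/2) z * fpow b (-1/2) z"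

lemma Pfac_nonzero: "z \<in> UHP \<Longrightarrow> Pfac a b z \<noteq> 0"
  by (simp add: Pfac_def fpow_nonzero)

lemma phi1_eq: "phi1 a b t \<rho> z = - complex_of_real \<rho> * Pfac a b z * Qfac t z"
  by (simp add: phi1_def Pfac_def mult_ac)

lemma phi2_eq:
  assumes z: "z \<in> UHP"
  shows "phi2 a b t \<rho> z = complex_of_real (1/\<rho>) * Qfac t z / Pfac a b z"
proof -
  have "Pfac a b z * (fpow (-a) (-1/2) z * fpow (-1/b) (1/2) z * fpow (1/a) (-1/2) z
          * fpow b (1/2) z)
        = (fpow (-a) (1/2) z * fpow (-a) (-(1/2)) z) * (fpow (-1/b) (-(1/2)) z * fpow (-1/b) (1/2) z)
          * (fpow (1/a) (1/2) z * fpow (1/a) (-(1/2)) z) * (fpow b (-(1/2)) z * fpow b (1/2) z)"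
    by (simp add: Pfac_def mult_ac)
  also have "\<dots> = 1"
    using fpow_mult_fpow_neg[OF z, of _ "1/2"] fpow_mult_fpow_neg[OF z, of _ "-(1/2)"]
    by (simp only: minus_minus mult_1_right)
  finally have "fpow (-a) (-1/2) z * fpow (-1/b) (1/2) z * fpow (1/a) (-1/2) z * fpow b (1/2) z
               = inverse (Pfac a b z)"
    by (rule inverse_unique[symmetric])
  moreover have "phi2 a b t \<rho> z = complex_of_real (1/\<rho>) * (fpow (-a) (-1/2) z * fpow (-1/b) (1/2) z
      * fpow (1/a) (-1/2) z * fpow b (1/2) z) * Qfac t z"
    by (simp only: phi2_def mult.assoc)
  ultimately show ?thesis
    by (simp only: divide_inverse mult.assoc mult.commute[of "inverse (Pfac a b z)"])
qed

lemma Qfac_nonzero: "z \<in> UHP \<Longrightarrow> Qfac t z \<noteq> 0"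
  by (simp add: Qfac_def fpow_nonzero)

lemma Pfac_holomorphic_on [holomorphic_intros]: "(\<lambda>z. Pfac a b z) holomorphic_on UHP"
  unfolding Pfac_def by (intro holomorphic_intros)

lemma Qfac_holomorphic_on [holomorphic_intros]: "(\<lambda>z. Qfac t z) holomorphic_on UHP"
  unfolding Qfac_def by (intro holomorphic_intros)

lemma neg_inverse_quadratic:
  fixes w c1 c2 :: complex
  assumes "w \<noteq> 0" "c1 * c2 = -1"
  shows "(- (1/w) - c1) * (- (1/w) - c2) = - ((w - c1) * (w - c2)) / w^2"
proof -
  have "(- (1/w) - c1) * (- (1/w) - c2) = (1 + (c1 + c2) * w + c1 * c2 * w^2) / w^2"
    using assms(1) by (simp add: field_simps power2_eq_square)
  also have "1 + (c1 + c2) * w + c1 * c2 * w^2 = - ((w - c1) * (w - c2))"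
    using assms(2) by algebra
  finally show ?thesis .
qed

lemma Pfac_squared:
  "z \<in> UHP \<Longrightarrow> (Pfac a b z)^2 =
     (z - complex_of_real (-a)) * (z - complex_of_real (1/a))
       / ((z - complex_of_real (-1/b)) * (z - complex_of_real b))"
  by (simp add: Pfac_def power_mult_distrib fpow_half_squared fpow_neg_half_squared
      del: of_real_minus of_real_divide) (simp add: divide_inverse inverse_mult_distrib ac_simps)

lemma Qfac_squared:
  "z \<in> UHP \<Longrightarrow> (Qfac t z)^2 =
     inverse ((z - complex_of_real (-t)) * (z - complex_of_real (1/t))
       * ((z - complex_of_real (-1/t)) * (z - complex_of_real t)))"
  by (simp add: Qfac_def power_mult_distrib fpow_neg_half_squared inverse_mult_distrib mult_ac
      del: of_real_minus of_real_divide)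

lemma Pfac_neg_inverse:
  assumes "z \<in> UHP" "a \<noteq> 0" "b \<noteq> 0"
  shows "Pfac a b (-1/z) = Pfac a b z"
proof (rule eq_on_UHP_if_squares_eq[OF continuous_on_neg_inverse_comp _ Pfac_nonzero])
  fix w assume w: "w \<in> UHP"
  then have "w \<noteq> 0" using UHP_neq_of_real[of w 0] by simp
  have "(- (1/w) - complex_of_real (-a)) * (- (1/w) - complex_of_real (1/a))
          = - ((w - complex_of_real (-a)) * (w - complex_of_real (1/a))) / w^2"
       "(- (1/w) - complex_of_real (-1/b)) * (- (1/w) - complex_of_real b)
          = - ((w - complex_of_real (-1/b)) * (w - complex_of_real b)) / w^2"
    using \<open>w \<noteq> 0\<close> assms(2,3) by (intro neg_inverse_quadratic; simp flip: of_real_mult)+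
  then show "(Pfac a b (-1/w))^2 = (Pfac a b w)^2"
    unfolding Pfac_squared[OF w] Pfac_squared[OF neg_inverse_in_UHP[OF w]]
    using \<open>w \<noteq> 0\<close> by simp
qed (use assms in \<open>auto intro: holomorphic_intros holomorphic_on_imp_continuous_on\<close>)

lemma Qfac_neg_inverse:
  assumes "z \<in> UHP" "t \<noteq> 0"
  shows "Qfac t (-1/z) = - (z^2) * Qfac t z"
proof (rule eq_on_UHP_if_squares_eq[of "\<lambda>z. Qfac t (-1/z)"])
  fix w assume w: "w \<in> UHP"
  then have "w \<noteq> 0" using UHP_neq_of_real[of w 0] by simp
  have "(- (1/w) - complex_of_real (-t)) * (- (1/w) - complex_of_real (1/t))
          = - ((w - complex_of_real (-t)) * (w - complex_of_real (1/t))) / w^2"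
       "(- (1/w) - complex_of_real (-1/t)) * (- (1/w) - complex_of_real t)
          = - ((w - complex_of_real (-1/t)) * (w - complex_of_real t)) / w^2"
    using \<open>w \<noteq> 0\<close> assms(2) by (intro neg_inverse_quadratic; simp flip: of_real_mult)+
  then show "(Qfac t (-1/w))^2 = (- (w^2) * Qfac t w)^2"
    unfolding power_mult_distrib Qfac_squared[OF w] Qfac_squared[OF neg_inverse_in_UHP[OF w]]
    using \<open>w \<noteq> 0\<close> by (simp add: inverse_mult_distrib power2_eq_square divide_inverse mult_ac)
next
  show "continuous_on UHP (\<lambda>z. Qfac t (-1/z))"
    by (intro continuous_on_neg_inverse_comp holomorphic_intros)
  show "continuous_on UHP (\<lambda>z. - (z^2) * Qfac t z)"
    by (intro continuous_intros holomorphic_on_imp_continuous_on holomorphic_intros)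
  show "- (w^2) * Qfac t w \<noteq> 0" if "w \<in> UHP" for w
    using that Qfac_nonzero UHP_neq_of_real[of w 0] by simp
qed (use assms in simp_all)

definition vertices :: "real \<Rightarrow> real \<Rightarrow> real \<Rightarrow> real list" where
  "vertices a b t = [-t, -a, -1/b, -1/t, 1/t, 1/a, b, t]"

lemma length_vertices [simp]: "length (vertices a b t) = 8"
  by (simp add: vertices_def)

text \<open>The integrands of \<open>WX\<close> for the branch points \<open>v ! 0 < \<dots> < v ! 7\<close> (the paper's
  \<open>v\<^sub>1, \<dots>, v\<^sub>8\<close>), with the branches \<open>pw c e\<close> of \<open>(z - c) powr e\<close> as a parameter:
  \<open>fpow\<close> gives the integrands on the upper half-plane, \<open>fpow_across\<close> below their analytic
  continuations across the real axis.\<close>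
definition weierstrass_integrand ::
    "(real \<Rightarrow> real \<Rightarrow> complex \<Rightarrow> complex) \<Rightarrow> real \<Rightarrow> real list \<Rightarrow> 3 \<Rightarrow> complex \<Rightarrow> complex"
  where
  "weierstrass_integrand pw \<rho> v j z =
     (let Q = pw (v!0) (-1/2) z * pw (v!3) (-1/2) z * pw (v!4) (-1/2) z * pw (v!7) (-1/2) z;
          \<phi>1 = - complex_of_real \<rho> * pw (v!1) (1/2) z * pw (v!2) (-1/2) z
                 * pw (v!5) (1/2) z * pw (v!6) (-1/2) z * Q;
          \<phi>2 = complex_of_real (1/\<rho>) * pw (v!1) (-1/2) z * pw (v!2) (1/2) z
                 * pw (v!5) (-1/2) z * pw (v!6) (1/2) z * Q
      in if j = 1 then (\<phi>2 - \<phi>1) / 2 else if j = 2 then \<i> * (\<phi>2 + \<phi>1) / 2 else \<i> * Q)"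

lemma holomorphic_on_weierstrass_integrand:
  assumes "length v = 8" and "\<And>c e. c \<in> set v \<Longrightarrow> pw c e holomorphic_on S"
  shows "weierstrass_integrand pw \<rho> v j holomorphic_on S"
proof -
  have [holomorphic_intros]: "i < 8 \<Longrightarrow> (\<lambda>z. pw (v!i) e z) holomorphic_on S" for i e
    using assms by simp
  show ?thesis
    unfolding weierstrass_integrand_def Let_def
    by (cases "j = 1"; cases "j = 2"; simp; intro holomorphic_intros; simp)
qed

lemma weierstrass_integrand_fpow:
  "weierstrass_integrand fpow \<rho> (vertices a b t) j z =
     (if j = 1 then (phi2 a b t \<rho> z - phi1 a b t \<rho> z) / 2
      else if j = 2 then \<i> * (phi2 a b t \<rho> z + phi1 a b t \<rho> z) / 2 else dhc t z)"
  by (simp add: weierstrass_integrand_def vertices_def phi1_def phi2_def dhc_def Qfac_def Let_def)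

lemma weierstrass_integrand_fpow_holomorphic_on:
  "weierstrass_integrand fpow \<rho> (vertices a b t) j holomorphic_on UHP"
  by (intro holomorphic_on_weierstrass_integrand fpow_holomorphic_on_UHP) (simp add: vertices_def)

lemma weierstrass_integrand_isotropic:
  assumes "z \<in> UHP" "\<rho> \<noteq> 0"
  shows "(\<Sum>j\<in>UNIV. (weierstrass_integrand fpow \<rho> (vertices a b t) j z)^2) = 0"
  using Pfac_nonzero[OF assms(1)] assms(2)
  by (simp add: sum_3 weierstrass_integrand_fpow phi1_eq phi2_eq[OF assms(1)] dhc_def)
    (simp add: field_simps power2_eq_square)

lemma weierstrass_integrand_neg_inverse:
  assumes z: "z \<in> UHP" and "a \<noteq> 0" "b \<noteq> 0" "t \<noteq> 0"
  shows "weierstrass_integrand fpow \<rho> (vertices a b t) j (-1/z)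
           = - (z^2) * weierstrass_integrand fpow \<rho> (vertices a b t) j z"
  unfolding weierstrass_integrand_fpow phi1_eq phi2_eq[OF neg_inverse_in_UHP[OF z]] phi2_eq[OF z]
    Pfac_neg_inverse[OF z assms(2,3)] Qfac_neg_inverse[OF z assms(4)] dhc_def
  by (simp add: algebra_simps add_divide_distrib diff_divide_distrib)

lemma WX_eq_Re_upper_primitives:
  "WX a b t \<rho> = (\<lambda>z. \<chi> j. Re (upper_primitive (weierstrass_integrand fpow \<rho> (vertices a b t) j) z))"
proof -
  have "weierstrass_integrand fpow \<rho> (vertices a b t) 1 = (\<lambda>w. (phi2 a b t \<rho> w - phi1 a b t \<rho> w) / 2)"
    "weierstrass_integrand fpow \<rho> (vertices a b t) 2 = (\<lambda>w. \<i> * (phi2 a b t \<rho> w + phi1 a b t \<rho> w) / 2)"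
    "weierstrass_integrand fpow \<rho> (vertices a b t) 3 = dhc t"
    by (auto simp: weierstrass_integrand_fpow)
  then show ?thesis
    by (intro ext) (simp add: WX_def upper_primitive_def vec_eq_iff forall_3)
qed

lemma WX_component:
  "WX a b t \<rho> z $ j = Re (upper_primitive (weierstrass_integrand fpow \<rho> (vertices a b t) j) z)"
  by (simp add: WX_eq_Re_upper_primitives)

lemma WX_minimal_surface:
  assumes "\<rho> \<noteq> 0"
  shows "minimal_surface_on UHP (WX a b t \<rho>)"
  unfolding WX_eq_Re_upper_primitives
proof (rule minimal_surface_on_Re_primitives[OF open_UHP])
  fix z assume z: "z \<in> UHP"
  show "(\<Sum>j\<in>UNIV. (weierstrass_integrand fpow \<rho> (vertices a b t) j z)^2) = 0"
    by (rule weierstrass_integrand_isotropic[OF z assms])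
  show "\<exists>j. weierstrass_integrand fpow \<rho> (vertices a b t) j z \<noteq> 0"
    using Qfac_nonzero[OF z] by (intro exI[of _ 3]) (simp add: weierstrass_integrand_fpow dhc_def)
qed (intro upper_primitive_has_field_derivative weierstrass_integrand_fpow_holomorphic_on)

lemma WX_neg_inverse:
  assumes "z \<in> UHP" "a \<noteq> 0" "b \<noteq> 0" "t \<noteq> 0"
  shows "WX a b t \<rho> (-1/z) = - WX a b t \<rho> z"
  unfolding WX_eq_Re_upper_primitives vec_eq_iff
  using upper_primitive_neg_inverse[OF weierstrass_integrand_fpow_holomorphic_on
        weierstrass_integrand_neg_inverse[OF _ assms(2-4)] assms(1)]
  by simp

lemma WX_image_point_symmetric:
  assumes "a \<noteq> 0" "b \<noteq> 0" "t \<noteq> 0"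
  shows "(\<lambda>p. 2 *\<^sub>R WX a b t \<rho> \<i> - p) ` (WX a b t \<rho> ` UHP) = WX a b t \<rho> ` UHP"
proof -
  have "WX a b t \<rho> \<i> = 0"
    by (simp add: WX_eq_Re_upper_primitives upper_primitive_def vec_eq_iff)
  moreover have "uminus ` WX a b t \<rho> ` UHP = WX a b t \<rho> ` UHP"
  proof safe
    fix z assume z: "z \<in> UHP"
    show "- WX a b t \<rho> z \<in> WX a b t \<rho> ` UHP"
      using WX_neg_inverse[OF z assms] neg_inverse_in_UHP[OF z] by (metis image_eqI)
    show "WX a b t \<rho> z \<in> uminus ` WX a b t \<rho> ` UHP"
      using WX_neg_inverse[OF z assms] neg_inverse_in_UHP[OF z]
      by (metis image_eqI minus_minus)
  qed
  ultimately show ?thesis by simp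
qed

text \<open>A branch of \<open>(z - c) powr e\<close> on the vertical strip over an interval \<open>(p, q)\<close> free of
  branch points: for \<open>c\<close> right of the strip, writing \<open>z - c = -(c - z)\<close> moves the cut of the
  logarithm to the right of the strip.\<close>
definition fpow_across :: "real \<Rightarrow> real \<Rightarrow> real \<Rightarrow> complex \<Rightarrow> complex" where
  "fpow_across p c e z =
     (if c \<le> p then (z - complex_of_real c) powr complex_of_real e
      else cis (pi * e) * (complex_of_real c - z) powr complex_of_real e)"

definition vertical_strip :: "real \<Rightarrow> real \<Rightarrow> complex set" where
  "vertical_strip p q = {z. p < Re z \<and> Re z < q}"

lemma open_vertical_strip: "open (vertical_strip p q)"
  unfolding vertical_strip_def by (intro open_Collect_conj open_halfspace_Re_gt open_halfspace_Re_lt)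

lemma convex_vertical_strip: "convex (vertical_strip p q)"
proof -
  have "vertical_strip p q = {z. Re z > p} \<inter> {z. Re z < q}"
    by (auto simp: vertical_strip_def)
  then show ?thesis
    by (simp add: convex_Int convex_halfspace_Re_gt convex_halfspace_Re_lt)
qed

lemma of_real_in_vertical_strip [simp]:
  "complex_of_real s \<in> vertical_strip p q \<longleftrightarrow> s \<in> {p<..<q}"
  by (simp add: vertical_strip_def)

lemma eventually_in_vertical_strip:
  assumes "s \<in> {p<..<q}"
  shows "eventually (\<lambda>z. z \<in> S \<and> z \<in> vertical_strip p q) (at (complex_of_real s) within S)"
proof -
  have "eventually (\<lambda>z. z \<in> vertical_strip p q) (nhds (complex_of_real s))"
    using eventually_nhds_in_open[OF open_vertical_strip] assms by simp
  then show ?thesis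
    unfolding eventually_at_filter by (rule eventually_mono) simp
qed

lemma fpow_across_eq_fpow: "z \<in> UHP \<Longrightarrow> fpow_across p c e z = fpow c e z"
proof (cases "c \<le> p")
  case False
  assume z: "z \<in> UHP"
  then have nz: "complex_of_real c - z \<noteq> 0" and "Im (complex_of_real c - z) < 0"
    using UHP_neq_of_real[of z c] by (auto simp: UHP_def)
  then have "Ln (z - complex_of_real c) = Ln (complex_of_real c - z) + \<i> * pi"
    using Ln_minus[OF nz] by simp
  then show ?thesis
    using False nz UHP_neq_of_real[OF z, of c]
    by (simp add: fpow_across_def fpow_def powr_def cis_conv_exp distrib_left exp_add mult_ac)
qed (simp add: fpow_across_def fpow_def)

lemma holomorphic_on_fpow_across:
  assumes "c \<le> p \<or> q \<le> c"
  shows "fpow_across p c e holomorphic_on vertical_strip p q"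
proof (cases "c \<le> p")
  case True
  then have "z - complex_of_real c \<notin> \<real>\<^sub>\<le>\<^sub>0" if "z \<in> vertical_strip p q" for z
    using that by (auto simp: vertical_strip_def complex_nonpos_Reals_iff)
  then show ?thesis
    using True unfolding fpow_across_def by (auto intro!: holomorphic_intros)
next
  case False
  then have "complex_of_real c - z \<notin> \<real>\<^sub>\<le>\<^sub>0" if "z \<in> vertical_strip p q" for z
    using that assms by (auto simp: vertical_strip_def complex_nonpos_Reals_iff)
  then show ?thesis
    using False unfolding fpow_across_def by (auto intro!: holomorphic_intros)
qed

lemma fpow_across_of_real_right:
  "c \<le> p \<Longrightarrow> c < x \<Longrightarrow> fpow_across p c e (complex_of_real x) = complex_of_real ((x - c) powr e)"
  by (simp add: fpow_across_def powr_of_real flip: of_real_diff)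

lemma fpow_across_of_real_left:
  "\<not> c \<le> p \<Longrightarrow> x < c \<Longrightarrow>
     fpow_across p c e (complex_of_real x) = cis (pi * e) * complex_of_real ((c - x) powr e)"
  by (simp add: fpow_across_def powr_of_real flip: of_real_diff)

lemma Re_const_on_real_interval:
  assumes H: "\<And>x. x \<in> {p<..<q} \<Longrightarrow> (H has_field_derivative g (complex_of_real x)) (at (complex_of_real x))"
    and imaginary: "\<And>x. x \<in> {p<..<q} \<Longrightarrow> Re (g (complex_of_real x)) = 0"
  shows "\<exists>c. \<forall>x\<in>{p<..<q}. Re (H (complex_of_real x)) = c"
proof (rule has_derivative_zero_constant[OF convex_real_interval(8)])
  fix x assume x: "x \<in> {p<..<q}"
  have "((\<lambda>x. H (complex_of_real x)) has_derivative (\<lambda>h. g (complex_of_real x) * complex_of_real h)) (at x)"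
    using has_derivative_compose[OF has_derivative_of_real[OF has_derivative_ident]
        H[OF x, unfolded has_field_derivative_def]] by simp
  from bounded_linear.has_derivative[OF bounded_linear_Re this]
  have "((\<lambda>x. Re (H (complex_of_real x))) has_derivative (\<lambda>h. Re (g (complex_of_real x) * complex_of_real h))) (at x)" .
  moreover have "(\<lambda>h. Re (g (complex_of_real x) * complex_of_real h)) = (\<lambda>h. 0)"
    using imaginary[OF x] by auto
  ultimately show "((\<lambda>x. Re (H (complex_of_real x))) has_derivative (\<lambda>h. 0)) (at x within {p<..<q})"
    by (simp add: has_derivative_at_withinI)
qed

lemma Re_upper_primitive_boundary_limit:
  assumes f: "f holomorphic_on UHP" and g: "g holomorphic_on vertical_strip p q"
    and eq: "\<And>z. z \<in> UHP \<Longrightarrow> z \<in> vertical_strip p q \<Longrightarrow> f z = g z"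
    and imaginary: "\<And>x. x \<in> {p<..<q} \<Longrightarrow> Re (g (complex_of_real x)) = 0"
  shows "\<exists>c. \<forall>s\<in>{p<..<q}. ((\<lambda>z. Re (upper_primitive f z)) \<longlongrightarrow> c) (at (complex_of_real s) within UHP)"
proof (cases "p < q")
  case True
  define z0 where "z0 = complex_of_real ((p + q) / 2)"
  have z0: "z0 \<in> vertical_strip p q"
    unfolding z0_def of_real_in_vertical_strip using True by simp
  define H where "H z = contour_integral (linepath z0 z) g" for z
  have H: "(H has_field_derivative g z) (at z)" if "z \<in> vertical_strip p q" for z
    unfolding H_def[abs_def]
    by (rule linepath_integral_has_field_derivative[OF g open_vertical_strip convex_vertical_strip z0 that])
  have "\<exists>C. \<forall>z\<in>UHP \<inter> vertical_strip p q. upper_primitive f z - H z = C"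
  proof (rule has_field_derivative_zero_constant)
    fix z assume z: "z \<in> UHP \<inter> vertical_strip p q"
    then have "((\<lambda>z. upper_primitive f z - H z) has_field_derivative f z - g z) (at z)"
      by (intro derivative_intros upper_primitive_has_field_derivative[OF f] H) auto
    then show "((\<lambda>z. upper_primitive f z - H z) has_field_derivative 0) (at z within UHP \<inter> vertical_strip p q)"
      using z eq by (simp add: has_field_derivative_at_within)
  qed (simp add: convex_Int convex_UHP convex_vertical_strip)
  then obtain C where C: "\<And>z. z \<in> UHP \<Longrightarrow> z \<in> vertical_strip p q \<Longrightarrow> upper_primitive f z = H z + C"
    by (metis IntI add.commute diff_eq_eq)
  have "\<exists>c. \<forall>x\<in>{p<..<q}. Re (H (complex_of_real x)) = c"
    by (rule Re_const_on_real_interval[where g = g]) (simp_all add: H imaginary)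
  then obtain c where c: "\<forall>x\<in>{p<..<q}. Re (H (complex_of_real x)) = c" ..
  show ?thesis
  proof (intro exI ballI)
    fix s assume s: "s \<in> {p<..<q}"
    have "isCont H (complex_of_real s)"
      by (rule DERIV_isCont[OF H]) (use s in simp)
    then have "(H \<longlongrightarrow> H (complex_of_real s)) (at (complex_of_real s) within UHP)"
      unfolding isCont_def by (rule Lim_at_imp_Lim_at_within)
    then have "((\<lambda>z. Re (H z) + Re C) \<longlongrightarrow> Re (H (complex_of_real s)) + Re C)
                 (at (complex_of_real s) within UHP)"
      by (intro tendsto_add tendsto_Re tendsto_const)
    moreover have "Re (H (complex_of_real s)) = c"
      using c s by blast
    moreover have "eventually (\<lambda>z. Re (H z) + Re C = Re (upper_primitive f z)) (at (complex_of_real s) within UHP)"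
      using eventually_in_vertical_strip[OF s] by (rule eventually_mono) (simp add: C)
    ultimately show "((\<lambda>z. Re (upper_primitive f z)) \<longlongrightarrow> c + Re C) (at (complex_of_real s) within UHP)"
      by (metis Lim_transform_eventually)
  qed
qed simp

lemma pderiv_Re_upper_primitive_boundary_limit:
  assumes f: "f holomorphic_on UHP" and g: "g holomorphic_on vertical_strip p q"
    and eq: "\<And>z. z \<in> UHP \<Longrightarrow> z \<in> vertical_strip p q \<Longrightarrow> f z = g z"
    and s: "s \<in> {p<..<q}" and real: "Im (g (complex_of_real s)) = 0"
  shows "((\<lambda>z. pderiv_dir (\<lambda>w. Re (upper_primitive f w)) \<i> z) \<longlongrightarrow> 0) (at (complex_of_real s) within UHP)"
proof -
  have "isCont g (complex_of_real s)"
    using holomorphic_on_imp_continuous_on[OF g] open_vertical_strip s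
    by (simp add: continuous_on_eq_continuous_at)
  then have "(g \<longlongrightarrow> g (complex_of_real s)) (at (complex_of_real s) within UHP)"
    unfolding isCont_def by (rule Lim_at_imp_Lim_at_within)
  then have "((\<lambda>z. Re (g z * \<i>)) \<longlongrightarrow> Re (g (complex_of_real s) * \<i>)) (at (complex_of_real s) within UHP)"
    by (intro tendsto_Re tendsto_mult_right)
  moreover have "Re (g (complex_of_real s) * \<i>) = 0"
    using real by simp
  moreover have "eventually (\<lambda>z. Re (g z * \<i>) = pderiv_dir (\<lambda>w. Re (upper_primitive f w)) \<i> z)
                   (at (complex_of_real s) within UHP)"
    using eventually_in_vertical_strip[OF s] by (rule eventually_mono)
      (simp add: eq pderiv_dir_Re[OF upper_primitive_has_field_derivative[OF f]])
  ultimately show ?thesis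
    by (metis Lim_transform_eventually)
qed

lemma sorted_wrt_nth_le:
  fixes v :: "real list"
  assumes "sorted_wrt (<) v" "i \<le> j" "j < length v"
  shows "v!i \<le> v!j"
  using sorted_wrt_nth_less[OF assms(1), of i j] assms(2,3) by (cases "i = j") auto

lemma fpow_across_of_real_nth:
  assumes v: "sorted_wrt (<) v" and k: "Suc k < length v" and i: "i < length v"
    and x: "x \<in> {v!k<..<v!Suc k}"
  shows "fpow_across (v!k) (v!i) e (complex_of_real x) =
           (if i \<le> k then 1 else cis (pi * e)) * complex_of_real (\<bar>x - v!i\<bar> powr e)"
proof (cases "i \<le> k")
  case True
  then have "v!i \<le> v!k"
    using sorted_wrt_nth_le[OF v] k by simp
  then show ?thesis
    using True x by (simp add: fpow_across_of_real_right)
next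
  case False
  then have "v!Suc k \<le> v!i"
    using sorted_wrt_nth_le[OF v] i by simp
  then show ?thesis
    using False x by (simp add: fpow_across_of_real_left abs_minus_commute)
qed

text \<open>On the interval \<open>(v ! k, v ! Suc k)\<close> each branch is a power of \<open>\<i>\<close> times a positive
  number, the power counting the branch points to the right.\<close>
lemma weierstrass_integrand_across_plane:
  assumes v: "sorted_wrt (<) v" "length v = 8"
    and jk: "(j, k) \<in> {(1, 0), (2, 1), (1, 2), (1, 4), (2, 5), (1, 6)}"
    and x: "x \<in> {v!k<..<v!Suc k}"
  shows "Re (weierstrass_integrand (fpow_across (v!k)) \<rho> v j x) = 0"
    and "\<forall>i. i \<noteq> j \<longrightarrow> Im (weierstrass_integrand (fpow_across (v!k)) \<rho> v i x) = 0"
  using jk fpow_across_of_real_nth[OF v(1) _ _ x] v(2)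
  by (auto simp: weierstrass_integrand_def Let_def forall_3)

lemma weierstrass_integrand_across_xline:
  assumes v: "sorted_wrt (<) v" "length v = 8" and x: "x \<in> {v!3<..<v!Suc 3}"
  shows "Re (weierstrass_integrand (fpow_across (v!3)) \<rho> v 2 x) = 0"
    and "Re (weierstrass_integrand (fpow_across (v!3)) \<rho> v 3 x) = 0"
  using fpow_across_of_real_nth[OF v(1) _ _ x] v(2)
  by (auto simp: weierstrass_integrand_def Let_def)

lemma sorted_nth_interval_no_points:
  fixes v :: "real list"
  assumes "sorted_wrt (<) v" "Suc k < length v" "c \<in> set v"
  shows "c \<le> v!k \<or> v!Suc k \<le> c"
proof -
  obtain i where "i < length v" "c = v!i"
    using assms(3) by (auto simp: in_set_conv_nth)
  then show ?thesis
    using sorted_wrt_nth_le[OF assms(1), of i k] sorted_wrt_nth_le[OF assms(1), of "Suc k" i] assms(2)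
    by (cases "i \<le> k") auto
qed

lemma weierstrass_integrand_across_eq:
  "z \<in> UHP \<Longrightarrow> weierstrass_integrand (fpow_across p) \<rho> v j z = weierstrass_integrand fpow \<rho> v j z"
  by (simp add: weierstrass_integrand_def fpow_across_eq_fpow)

lemma holomorphic_on_weierstrass_integrand_across:
  assumes "sorted_wrt (<) v" "length v = 8" "Suc k < 8"
  shows "weierstrass_integrand (fpow_across (v!k)) \<rho> v j holomorphic_on vertical_strip (v!k) (v!Suc k)"
  using assms sorted_nth_interval_no_points[OF assms(1)]
  by (intro holomorphic_on_weierstrass_integrand holomorphic_on_fpow_across) auto

context
  fixes a b t \<rho> :: real and k :: nat
  assumes sorted: "sorted_wrt (<) (vertices a b t)" and k: "Suc k < 8"
begin

lemma WX_boundary_limit: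
  assumes "\<forall>x\<in>{vertices a b t ! k<..<vertices a b t ! Suc k}.
             Re (weierstrass_integrand (fpow_across (vertices a b t ! k)) \<rho> (vertices a b t) j x) = 0"
  shows "\<exists>c. \<forall>s\<in>{vertices a b t ! k<..<vertices a b t ! Suc k}.
           ((\<lambda>z. WX a b t \<rho> z $ j) \<longlongrightarrow> c) (at (complex_of_real s) within UHP)"
  unfolding WX_component
proof (rule Re_upper_primitive_boundary_limit[OF weierstrass_integrand_fpow_holomorphic_on
      holomorphic_on_weierstrass_integrand_across[OF sorted length_vertices k]])
qed (use assms weierstrass_integrand_across_eq in auto)

lemma WX_pderiv_boundary_limit:
  assumes "s \<in> {vertices a b t ! k<..<vertices a b t ! Suc k}"
    and "Im (weierstrass_integrand (fpow_across (vertices a b t ! k)) \<rho> (vertices a b t) i s) = 0"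
  shows "((\<lambda>z. pderiv_dir (\<lambda>w. WX a b t \<rho> w $ i) \<i> z) \<longlongrightarrow> 0) (at (complex_of_real s) within UHP)"
  unfolding WX_component
proof (rule pderiv_Re_upper_primitive_boundary_limit[OF weierstrass_integrand_fpow_holomorphic_on
      holomorphic_on_weierstrass_integrand_across[OF sorted length_vertices k] _ assms])
qed (use weierstrass_integrand_across_eq in auto)

end

lemma WX_planar_arc:
  assumes sorted: "sorted_wrt (<) (vertices a b t)"
    and jk: "(j, k) \<in> {(1, 0), (2, 1), (1, 2), (1, 4), (2, 5), (1, 6)}"
  shows "\<exists>c. planar_symmetry_curve (WX a b t \<rho>) {vertices a b t ! k<..<vertices a b t ! Suc k} j c"
proof -
  have k: "Suc k < 8" using jk by auto
  note phase = weierstrass_integrand_across_plane[OF sorted length_vertices jk]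
  obtain c where "\<forall>s\<in>{vertices a b t ! k<..<vertices a b t ! Suc k}.
                    ((\<lambda>z. WX a b t \<rho> z $ j) \<longlongrightarrow> c) (at (complex_of_real s) within UHP)"
    using WX_boundary_limit[OF sorted k, where \<rho> = \<rho> and j = j] phase(1) by blast
  then show ?thesis
    using WX_pderiv_boundary_limit[OF sorted k] phase(2)
    unfolding planar_symmetry_curve_def by blast
qed

lemma WX_xline_arc:
  assumes sorted: "sorted_wrt (<) (vertices a b t)"
  shows "\<exists>d2 d3. maps_to_xline (WX a b t \<rho>) {vertices a b t ! 3<..<vertices a b t ! Suc 3} d2 d3"
proof -
  have k: "Suc 3 < (8::nat)" by simp
  note phase = weierstrass_integrand_across_xline[OF sorted length_vertices]
  obtain d2 where "\<forall>s\<in>{vertices a b t ! 3<..<vertices a b t ! Suc 3}.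
                     ((\<lambda>z. WX a b t \<rho> z $ 2) \<longlongrightarrow> d2) (at (complex_of_real s) within UHP)"
    using WX_boundary_limit[OF sorted k, where \<rho> = \<rho> and j = 2] phase(1) by blast
  moreover obtain d3 where "\<forall>s\<in>{vertices a b t ! 3<..<vertices a b t ! Suc 3}.
                     ((\<lambda>z. WX a b t \<rho> z $ 3) \<longlongrightarrow> d3) (at (complex_of_real s) within UHP)"
    using WX_boundary_limit[OF sorted k, where \<rho> = \<rho> and j = 3] phase(2) by blast
  ultimately show ?thesis
    unfolding maps_to_xline_def by blast
qed

lemma WX_boundary_limit_neg_inverse:
  assumes "a \<noteq> 0" "b \<noteq> 0" "t \<noteq> 0" "s \<noteq> 0"
    and lim: "((\<lambda>z. WX a b t \<rho> z $ j) \<longlongrightarrow> c) (at (complex_of_real (-1/s)) within UHP)"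
  shows "((\<lambda>z. WX a b t \<rho> z $ j) \<longlongrightarrow> -c) (at (complex_of_real s) within UHP)"
proof -
  have "filterlim (\<lambda>z. -1/z) (at (complex_of_real (-1/s)) within UHP) (at (complex_of_real s) within UHP)"
    unfolding filterlim_at
  proof
    show "\<forall>\<^sub>F z in at (complex_of_real s) within UHP. -1/z \<in> UHP \<and> -1/z \<noteq> complex_of_real (-1/s)"
      unfolding eventually_at_filter
    proof (rule always_eventually, intro allI impI)
      fix z assume "z \<in> UHP"
      then show "-1/z \<in> UHP \<and> -1/z \<noteq> complex_of_real (-1/s)"
        using neg_inverse_in_UHP UHP_neq_of_real by blast
    qed
    show "((\<lambda>z. -1/z) \<longlongrightarrow> complex_of_real (-1/s)) (at (complex_of_real s) within UHP)"
      using assms(4) by (auto intro!: tendsto_eq_intros)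
  qed
  from tendsto_minus[OF filterlim_compose[OF lim this]]
  have "((\<lambda>z. - (WX a b t \<rho> (-1/z) $ j)) \<longlongrightarrow> -c) (at (complex_of_real s) within UHP)" .
  then show ?thesis
  proof (rule Lim_transform_eventually)
    show "\<forall>\<^sub>F z in at (complex_of_real s) within UHP. - (WX a b t \<rho> (-1/z) $ j) = WX a b t \<rho> z $ j"
      unfolding eventually_at_filter
    proof (rule always_eventually, intro allI impI)
      fix z assume "z \<in> UHP"
      from WX_neg_inverse[OF this assms(1-3)]
      show "- (WX a b t \<rho> (-1/z) $ j) = WX a b t \<rho> z $ j"
        by simp
    qed
  qed
qed

lemma neg_inverse_in_interval:
  fixes p q s :: real
  assumes "0 < p" "s \<in> {p<..<q}"
  shows "s \<noteq> 0 \<and> -1/s \<in> {-1/p<..<-1/q}"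
proof -
  have "1/s < 1/p" "1/q < 1/s"
    using assms by (auto intro!: divide_strict_left_mono)
  then show ?thesis
    using assms by auto
qed

text \<open>\<open>z \<mapsto> -1/z\<close> maps the \<open>k\<close>-th boundary interval onto the \<open>(k+4)\<close>-th one.\<close>
lemma WX_planar_arc_neg_inverse:
  assumes pos: "0 < a" "0 < b" "0 < t" and sorted: "sorted_wrt (<) (vertices a b t)"
    and jk: "(j, k) \<in> {(1, 0), (2, 1), (1, 2)}"
    and curve: "planar_symmetry_curve (WX a b t \<rho>) {vertices a b t ! k<..<vertices a b t ! Suc k} j c"
  shows "planar_symmetry_curve (WX a b t \<rho>) {vertices a b t ! (k+4)<..<vertices a b t ! Suc (k+4)} j (-c)"
  unfolding planar_symmetry_curve_def
proof (intro ballI conjI allI impI)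
  fix s assume s: "s \<in> {vertices a b t ! (k+4)<..<vertices a b t ! Suc (k+4)}"
  have "s \<noteq> 0 \<and> -1/s \<in> {vertices a b t ! k<..<vertices a b t ! Suc k}"
  proof -
    from jk consider "k = 0" | "k = 1" | "k = 2" by auto
    then show ?thesis
      using neg_inverse_in_interval[OF _ s] pos by cases (auto simp: vertices_def)
  qed
  then have "s \<noteq> 0" "((\<lambda>z. WX a b t \<rho> z $ j) \<longlongrightarrow> c) (at (complex_of_real (-1/s)) within UHP)"
    using curve unfolding planar_symmetry_curve_def by blast+
  then show "((\<lambda>z. WX a b t \<rho> z $ j) \<longlongrightarrow> -c) (at (complex_of_real s) within UHP)"
    using pos by (intro WX_boundary_limit_neg_inverse) auto
  have jk': "(j, k + 4) \<in> {(1, 0), (2, 1), (1, 2), (1, 4), (2, 5), (1, 6)}" and "Suc (k + 4) < 8"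
    using jk by auto
  fix i assume "i \<noteq> j"
  then show "((\<lambda>z. pderiv_dir (\<lambda>w. WX a b t \<rho> w $ i) \<i> z) \<longlongrightarrow> 0) (at (complex_of_real s) within UHP)"
    using WX_pderiv_boundary_limit[OF sorted \<open>Suc (k + 4) < 8\<close> s]
      weierstrass_integrand_across_plane(2)[OF sorted length_vertices jk' s] by blast
qed

lemma WX_xline_arc_at_infinity:
  assumes "0 < a" "0 < b" "0 < t"
    and "maps_to_xline (WX a b t \<rho>) {-1/t<..<1/t} d2 d3"
  shows "maps_to_xline (WX a b t \<rho>) ({t<..} \<union> {..<-t}) (-d2) (-d3)"
  unfolding maps_to_xline_def
proof (intro ballI conjI)
  fix s assume "s \<in> {t<..} \<union> {..<-t}"
  then have "s \<noteq> 0" "-1/s \<in> {-1/t<..<1/t}"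
    using assms(3) by (auto simp: field_simps)
  then have "((\<lambda>z. WX a b t \<rho> z $ 2) \<longlongrightarrow> d2) (at (complex_of_real (-1/s)) within UHP)"
    "((\<lambda>z. WX a b t \<rho> z $ 3) \<longlongrightarrow> d3) (at (complex_of_real (-1/s)) within UHP)"
    using assms(4) unfolding maps_to_xline_def by blast+
  then show "((\<lambda>z. WX a b t \<rho> z $ 2) \<longlongrightarrow> -d2) (at (complex_of_real s) within UHP)"
    "((\<lambda>z. WX a b t \<rho> z $ 3) \<longlongrightarrow> -d3) (at (complex_of_real s) within UHP)"
    using assms(1-3) \<open>s \<noteq> 0\<close> by (auto intro: WX_boundary_limit_neg_inverse)
qed

lemma vertices_sorted:
  assumes "0 < a" "0 < b" "0 < t" "1/t < 1/a" "1/a < b" "b < t"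
  shows "sorted_wrt (<) (vertices a b t)"
proof -
  have "a < t" "1/t < 1/b"
    using assms inverse_less_iff_less[of t a] inverse_less_iff_less[of t b]
    by (simp_all add: inverse_eq_divide)
  moreover have "1/b < a"
    using assms by (simp add: divide_less_eq mult.commute)
  ultimately show ?thesis
    using assms unfolding vertices_def sorted_wrt2[OF transp_on_less] sorted_wrt1 by simp
qed

theorem mainTheorem2:
  fixes a b t \<rho> :: real
  assumes "a > 0" "b > 0" "t > 0" "1/t < 1/a" "1/a < b" "b < t" "\<rho> > 0"
  shows "\<exists>(k::real) (Q::real^3 \<Rightarrow> real^3) (c::real^3) A A' B c2 c3 d2 d3.
     k > 0 \<and> orthogonal_transformation Q \<and>
     (let Y = (\<lambda>z. k *\<^sub>R Q (WX a b t \<rho> z) + c) in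
        minimal_surface_on UHP Y
      \<and> maps_to_xline Y ({t<..} \<union> {..<-t}) c2 c3
      \<and> maps_to_xline Y {-1/t<..<1/t} d2 d3
      \<and> planar_symmetry_curve Y {-t<..<-a} 1 A
      \<and> planar_symmetry_curve Y {1/t<..<1/a} 1 (-A)
      \<and> planar_symmetry_curve Y {-a<..<-1/b} 2 (-B)
      \<and> planar_symmetry_curve Y {1/a<..<b} 2 B
      \<and> planar_symmetry_curve Y {-1/b<..<-1/t} 1 A'
      \<and> planar_symmetry_curve Y {b<..<t} 1 (-A')
      \<and> (\<lambda>p. 2 *\<^sub>R Y \<i> - p) ` (Y ` UHP) = Y ` UHP)"
proof -
  have sorted: "sorted_wrt (<) (vertices a b t)"
    using vertices_sorted assms by blast
  note arc = WX_planar_arc[OF sorted, where \<rho> = \<rho>]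
  note mirror = WX_planar_arc_neg_inverse[OF assms(1-3) sorted, where \<rho> = \<rho>]
  obtain A where A: "planar_symmetry_curve (WX a b t \<rho>) {-t<..<-a} 1 A"
    using arc[where j = 1 and k = 0] by (auto simp: vertices_def)
  obtain B where B: "planar_symmetry_curve (WX a b t \<rho>) {-a<..<-1/b} 2 B"
    using arc[where j = 2 and k = 1] by (auto simp: vertices_def)
  obtain A' where A': "planar_symmetry_curve (WX a b t \<rho>) {-1/b<..<-1/t} 1 A'"
    using arc[where j = 1 and k = 2] by (auto simp: vertices_def)
  obtain d2 d3 where D: "maps_to_xline (WX a b t \<rho>) {-1/t<..<1/t} d2 d3"
    using WX_xline_arc[OF sorted, where \<rho> = \<rho>] by (auto simp: vertices_def)
  have mirrored: "planar_symmetry_curve (WX a b t \<rho>) {1/t<..<1/a} 1 (-A)"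
       "planar_symmetry_curve (WX a b t \<rho>) {1/a<..<b} 2 (-B)"
       "planar_symmetry_curve (WX a b t \<rho>) {b<..<t} 1 (-A')"
    using mirror[where j = 1 and k = 0] mirror[where j = 2 and k = 1] mirror[where j = 1 and k = 2]
      A B A' by (simp_all add: vertices_def)
  show ?thesis
    unfolding Let_def
  proof (rule exI[of _ 1], rule exI[of _ id], rule exI[of _ 0], rule exI[of _ A], rule exI[of _ A'],
      rule exI[of _ "-B"], rule exI[of _ "-d2"], rule exI[of _ "-d3"], rule exI[of _ d2], rule exI[of _ d3])
  qed (use assms A B A' D mirrored WX_xline_arc_at_infinity[OF assms(1-3) D] WX_minimal_surface
      WX_image_point_symmetric orthogonal_transformation_id in \<open>simp add: id_def\<close>)
qed

end
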